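(* For every $\eta>1$, $$\lim_{N\to\infty}\sum_{n=2}^N a_n\frac{(\eta-1)^n}{\eta^{n-1}}=G(\eta).$$
   Context: Let $g:(-\pi^2,\infty)\to(0,\infty)$, $g(r)=\sinh(\sqrt r)/\sqrt r$ for $r>0$, $g(0)=1$, $g(r)=\sin(\sqrt{-r})/\sqrt{-r}$ for $-\pi^2<r<0$; it is a strictly increasing bijection with inverse $g^{-1}$. For $\eta>0$ define $G(\eta)=2\eta-2\,\mathrm{sgn}\big(4g^{-1}(\eta^{-1})+\pi^2\big)\sqrt{\eta^2+g^{-1}(\eta^{-1})}+g^{-1}(\eta^{-1})$ (the sign equals $1$ for $\eta<\pi/2$, $0$ at $\eta=\pi/2$, $-1$ for $\eta>\pi/2$). The coefficients $a_n$, $n\ge2$, are determined recursively by requiring that for each $n\ge 2$ the $n$-th right derivative at $\eta=1$ of $G$ equals that of $\sum_{k=2}^n a_k(\eta-1)^k/\eta^{k-1}$; equivalently, $a_n$ is the $n$-th Taylor coefficient at $\xi=0$ of $F(\xi)=(1-\xi)G\big(\frac1{1-\xi}\big)$ (so that $F(\xi)=\sum_{n\ge2}a_n\xi^n$ near $0$). *)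

theory Defs
  imports "HOL-Analysis.Analysis"
begin

definition gfun :: "real \<Rightarrow> real" where
  "gfun r = (if r > 0 then sinh (sqrt r) / sqrt r
             else if r = 0 then 1
             else sin (sqrt (- r)) / sqrt (- r))"

definition ginv :: "real \<Rightarrow> real" where
  "ginv y = (THE r. - (pi\<^sup>2) < r \<and> gfun r = y)"

definition Gfun :: "real \<Rightarrow> real" where
  "Gfun \<eta> = 2 * \<eta> - 2 * sgn (4 * ginv (1 / \<eta>) + pi\<^sup>2) * sqrt (\<eta>\<^sup>2 + ginv (1 / \<eta>))
             + ginv (1 / \<eta>)"

definition Ffun :: "real \<Rightarrow> real" where
  "Ffun \<xi> = (1 - \<xi>) * Gfun (1 / (1 - \<xi>))"

definition acoef :: "nat \<Rightarrow> real" where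
  "acoef n = (deriv ^^ n) Ffun 0 / fact n"

end

theory Submission
  imports Defs "HOL-Complex_Analysis.Complex_Analysis"
begin

text \<open>
  The function g is the restriction to (-pi^2, infinity) of the Weierstrass product
  g r = prod_k (1 + r / ((k+1) pi)^2), which is holomorphic on the half-plane Re r > -pi^2,
  where it equals sinh (sqrt r) / sqrt r. Its logarithm L = sum_k Ln (1 + r / ((k+1) pi)^2)
  is injective there, because every term is, in the monotone-operator sense
  Re ((L b - L a) * cnj (b - a)) > 0. A connectedness argument, resting on the estimate
  |sinh q / q - 1| >= 1 both on the boundary of the half-plane and for large |r|, shows that
  the image of L contains Ln of the disc |w - 1| < 1. Hence r(xi) = L^-1 (Ln (1 - xi)) is a
  holomorphic branch of g^-1 (1 - xi) on the unit disc, and so is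
  F xi = 2 - 2 cosh (sqrt r(xi)) + r(xi) (1 - xi). The Taylor series of F at 0 therefore
  converges on (-1, 1), and the theorem is the substitution xi = (eta - 1) / eta.
\<close>

lemma Re_Ln_diff_mult_cnj_pos:
  fixes u v :: complex
  assumes u: "Re u > 0" and v: "Re v > 0" and uv: "u \<noteq> v"
  shows "Re ((Ln u - Ln v) * cnj (u - v)) > 0"
proof -
  define d where "d = u - v"
  have d0: "d \<noteq> 0" using uv d_def by auto
  define \<gamma> where "\<gamma> t = v + of_real t * d" for t
  have Re_\<gamma>: "Re (\<gamma> t) > 0" if "0 \<le> t" "t \<le> 1" for t
  proof -
    have "Re (\<gamma> t) = (1 - t) * Re v + t * Re u" by (simp add: \<gamma>_def d_def algebra_simps)
    also have "\<dots> > 0"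
    proof (cases "t = 0")
      case False
      hence "t * Re u > 0" using that u by simp
      moreover have "(1 - t) * Re v \<ge> 0" using that v by simp
      ultimately show ?thesis by linarith
    qed (use v in simp)
    finally show ?thesis .
  qed
  \<comment> \<open>Mean value theorem along the segment from v to u; the derivative is |d|^2 Re (1 / \<gamma> t) > 0.\<close>
  define \<phi> where "\<phi> t = Re (Ln (\<gamma> t) * cnj d)" for t
  have \<phi>_deriv: "(\<phi> has_real_derivative Re (d / \<gamma> t * cnj d)) (at t)" if "0 \<le> t" "t \<le> 1" for t
  proof -
    have "\<gamma> t \<notin> \<real>\<^sub>\<le>\<^sub>0" using Re_\<gamma>[OF that] by (auto simp: complex_nonpos_Reals_iff)
    hence "((\<lambda>z. Ln (v + z * d) * cnj d) has_field_derivative (d / \<gamma> t * cnj d)) (at (of_real t))"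
      unfolding \<gamma>_def by (auto intro!: derivative_eq_intros simp: field_simps)
    from has_field_derivative_Re[OF has_vector_derivative_real_field[OF this]]
    show ?thesis unfolding \<phi>_def \<gamma>_def .
  qed
  have \<phi>_deriv_pos: "Re (d / \<gamma> t * cnj d) > 0" if "0 \<le> t" "t \<le> 1" for t
  proof -
    have "d / \<gamma> t * cnj d = of_real ((cmod d)\<^sup>2) / \<gamma> t"
      by (simp add: complex_norm_square[symmetric])
    also have "Re \<dots> = (cmod d)\<^sup>2 * Re (\<gamma> t) / (cmod (\<gamma> t))\<^sup>2"
      by (simp add: Re_divide cmod_power2)
    also have "\<dots> > 0" using Re_\<gamma>[OF that] d0 by (auto intro!: divide_pos_pos)
    finally show ?thesis .
  qed
  obtain z where "0 < z" "z < 1" "\<phi> 1 - \<phi> 0 = (1 - 0) * Re (d / \<gamma> z * cnj d)"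
    using MVT2[of 0 1 \<phi> "\<lambda>t. Re (d / \<gamma> t * cnj d)"] \<phi>_deriv by force
  hence "\<phi> 1 - \<phi> 0 > 0" using \<phi>_deriv_pos[of z] by simp
  moreover have "\<phi> 1 - \<phi> 0 = Re ((Ln u - Ln v) * cnj (u - v))"
    by (simp add: \<phi>_def \<gamma>_def d_def algebra_simps)
  ultimately show ?thesis by simp
qed

lemma Re_sinh: "Re (sinh q) = sinh (Re q) * cos (Im q)"
  and Im_sinh: "Im (sinh q) = cosh (Re q) * sin (Im q)"
  and Re_cosh: "Re (cosh q) = cosh (Re q) * cos (Im q)"
  and Im_cosh: "Im (cosh q) = sinh (Re q) * sin (Im q)"
  for q :: complex
  by (simp_all add: sinh_def cosh_def Re_exp Im_exp scaleR_conv_of_real field_simps)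

lemma sinh_complex_of_real: "sinh (complex_of_real x) = complex_of_real (sinh x)"
  and cosh_complex_of_real: "cosh (complex_of_real x) = complex_of_real (cosh x)"
  and sinh_i_times_of_real: "sinh (\<i> * complex_of_real x) = \<i> * complex_of_real (sin x)"
  and cosh_i_times_of_real: "cosh (\<i> * complex_of_real x) = complex_of_real (cos x)"
  by (rule complex_eqI; simp add: Re_sinh Im_sinh Re_cosh Im_cosh)+

lemma norm_sinh_squared: "(cmod (sinh q))\<^sup>2 = (sinh (Re q))\<^sup>2 + (sin (Im q))\<^sup>2"
proof -
  have "(cmod (sinh q))\<^sup>2 = (sinh (Re q) * cos (Im q))\<^sup>2 + (cosh (Re q) * sin (Im q))\<^sup>2"
    by (simp add: cmod_power2 Re_sinh Im_sinh)
  also have "\<dots> = (sinh (Re q))\<^sup>2 + (sin (Im q))\<^sup>2"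
    by (simp add: power_mult_distrib cosh_square_eq cos_squared_eq algebra_simps)
  finally show ?thesis .
qed

lemma sinh_ge_taylor_5:
  fixes x :: real
  assumes "x \<ge> 0"
  shows "sinh x \<ge> x + x ^ 3 / 6 + x ^ 5 / 120"
proof -
  let ?f = "\<lambda>n. if even n then 0 else x ^ n /\<^sub>R fact n"
  have "sum ?f {..<6} \<le> suminf ?f"
    using sinh_converges[of x] assms by (intro sum_le_suminf) (auto simp: sums_iff)
  moreover have "sum ?f {..<6} = x + x ^ 3 / 6 + x ^ 5 / 120"
    by (simp add: lessThan_nat_numeral fact_numeral)
  ultimately show ?thesis using sinh_converges[of x] by (simp add: sums_iff)
qed

lemma higher_deriv_real_restriction:
  fixes f :: "complex \<Rightarrow> complex" and F :: "real \<Rightarrow> real"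
  assumes hol: "f holomorphic_on ball 0 R"
    and real: "\<And>x. \<bar>x\<bar> < R \<Longrightarrow> f (complex_of_real x) = complex_of_real (F x)"
    and x: "\<bar>x\<bar> < R"
  shows "(deriv ^^ n) F x = Re ((deriv ^^ n) f (complex_of_real x))"
  using x
proof (induction n arbitrary: x)
  case 0
  thus ?case using real by simp
next
  case (Suc n)
  define h where "h = (deriv ^^ n) f"
  have "h holomorphic_on ball 0 R" unfolding h_def by (intro holomorphic_higher_deriv hol) auto
  moreover have "complex_of_real x \<in> ball 0 R" using Suc.prems by simp
  ultimately have "(h has_field_derivative deriv h (complex_of_real x)) (at (complex_of_real x))"
    by (intro holomorphic_derivI) auto
  from has_field_derivative_Re[OF has_vector_derivative_real_field[OF this]]
  have "((deriv ^^ n) F has_real_derivative Re (deriv h (complex_of_real x))) (at x)"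
  proof (rule has_field_derivative_transform_within_open)
    show "open {-R<..<R}" "x \<in> {-R<..<R}" using Suc.prems by auto
    show "Re (h (complex_of_real t)) = (deriv ^^ n) F t" if "t \<in> {-R<..<R}" for t
      using Suc.IH[of t] that by (simp add: h_def abs_less_iff)
  qed
  hence "deriv ((deriv ^^ n) F) x = Re (deriv h (complex_of_real x))" by (rule DERIV_imp_deriv)
  thus ?case by (simp add: h_def)
qed

lemma real_restriction_taylor_sums:
  fixes f :: "complex \<Rightarrow> complex" and F :: "real \<Rightarrow> real"
  assumes hol: "f holomorphic_on ball 0 R"
    and real: "\<And>x. \<bar>x\<bar> < R \<Longrightarrow> f (complex_of_real x) = complex_of_real (F x)"
    and x: "\<bar>x\<bar> < R"
  shows "(\<lambda>n. (deriv ^^ n) F 0 / fact n * x ^ n) sums F x"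
proof -
  have "(\<lambda>n. (deriv ^^ n) f 0 / fact n * (complex_of_real x - 0) ^ n) sums f (complex_of_real x)"
    using x by (intro holomorphic_power_series[OF hol]) simp
  hence "(\<lambda>n. Re ((deriv ^^ n) f 0 / fact n * complex_of_real x ^ n)) sums F x"
    using real[OF x] by (simp add: sums_complex_iff)
  moreover have "Re ((deriv ^^ n) f 0 / fact n * complex_of_real x ^ n) = (deriv ^^ n) F 0 / fact n * x ^ n"
    for n
  proof -
    have "(deriv ^^ n) f 0 / fact n * complex_of_real x ^ n = (x ^ n / fact n) *\<^sub>R (deriv ^^ n) f 0"
      by (simp add: scaleR_conv_of_real field_simps)
    moreover have "(deriv ^^ n) F 0 = Re ((deriv ^^ n) f (complex_of_real 0))"
      using x by (intro higher_deriv_real_restriction[OF hol real]) auto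
    ultimately show ?thesis by simp
  qed
  ultimately show ?thesis by simp
qed

lemma sums_imp_tendsto_sum_from_2:
  fixes f :: "nat \<Rightarrow> 'a::real_normed_vector"
  assumes "f sums s" and "f 0 = 0" and "f 1 = 0"
  shows "(\<lambda>N. \<Sum>n=2..N. f n) \<longlonglongrightarrow> s"
proof -
  have "(\<Sum>n<Suc N. f n) = (\<Sum>n=2..N. f n)" for N
  proof (rule sum.mono_neutral_right)
    show "\<forall>i\<in>{..<Suc N} - {2..N}. f i = 0"
    proof
      fix i assume "i \<in> {..<Suc N} - {2..N}"
      hence "i = 0 \<or> i = 1" by auto
      thus "f i = 0" using assms(2,3) by auto
    qed
  qed auto
  moreover have "(\<lambda>N. \<Sum>n<Suc N. f n) \<longlonglongrightarrow> s"
    using assms(1) by (intro LIMSEQ_Suc) (simp add: sums_def)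
  ultimately show ?thesis by simp
qed

subsection \<open>The product for g on the half-plane\<close>

text \<open>The zeros of sinh (sqrt r) / sqrt r are the points r = - root_sq k.\<close>

definition root_sq :: "nat \<Rightarrow> real" where
  "root_sq k = (real (Suc k) * pi)\<^sup>2"

definition halfplane :: "complex set" where
  "halfplane = {r. Re r > - (pi\<^sup>2)}"

definition log_factor :: "nat \<Rightarrow> complex \<Rightarrow> complex" where
  "log_factor k r = Ln (1 + r / complex_of_real (root_sq k))"

definition log_g_cx :: "complex \<Rightarrow> complex" where
  "log_g_cx r = (\<Sum>k. log_factor k r)"

definition log_g_cx_deriv :: "complex \<Rightarrow> complex" where
  "log_g_cx_deriv r = (\<Sum>k. 1 / (complex_of_real (root_sq k) + r))"

definition g_cx :: "complex \<Rightarrow> complex" where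
  "g_cx r = exp (log_g_cx r)"

lemma pi_sq_le_root_sq: "pi\<^sup>2 \<le> root_sq k"
proof -
  have "1 * pi \<le> real (Suc k) * pi" by (intro mult_right_mono) auto
  thus ?thesis unfolding root_sq_def by (intro power_mono) auto
qed

lemma root_sq_pos: "root_sq k > 0"
  using pi_sq_le_root_sq[of k] by (rule less_le_trans[rotated]) simp

lemma open_halfplane: "open halfplane"
  unfolding halfplane_def by (rule open_halfspace_Re_gt)

lemma zero_in_halfplane: "0 \<in> halfplane"
  by (simp add: halfplane_def)

lemma cnj_in_halfplane_iff [simp]: "cnj r \<in> halfplane \<longleftrightarrow> r \<in> halfplane"
  by (simp add: halfplane_def)

lemma of_real_in_halfplane_iff [simp]: "complex_of_real r \<in> halfplane \<longleftrightarrow> r > - (pi\<^sup>2)"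
  by (simp add: halfplane_def)

lemma Re_one_plus_div_root_sq_pos:
  assumes "r \<in> halfplane"
  shows "Re (1 + r / complex_of_real (root_sq k)) > 0"
proof -
  have "Re r > - root_sq k" using assms pi_sq_le_root_sq[of k] by (simp add: halfplane_def)
  hence "Re r / root_sq k > -1" using root_sq_pos[of k] by (simp add: field_simps)
  thus ?thesis by (simp add: Re_divide_of_real)
qed

lemma one_plus_div_root_sq_nonpos_Reals:
  assumes "r \<in> halfplane"
  shows "1 + r / complex_of_real (root_sq k) \<notin> \<real>\<^sub>\<le>\<^sub>0"
  using Re_one_plus_div_root_sq_pos[OF assms, of k] by (auto simp: complex_nonpos_Reals_iff)

lemma has_field_derivative_log_factor:
  assumes "r \<in> halfplane"
  shows "(log_factor k has_field_derivative 1 / (complex_of_real (root_sq k) + r)) (at r)"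
proof -
  have "Re (complex_of_real (root_sq k) + r) > 0"
    using assms pi_sq_le_root_sq[of k] by (simp add: halfplane_def)
  hence "complex_of_real (root_sq k) + r \<noteq> 0" by (metis less_irrefl zero_complex.sel(1))
  thus ?thesis unfolding log_factor_def
    using one_plus_div_root_sq_nonpos_Reals[OF assms, of k] root_sq_pos[of k]
    by (auto intro!: derivative_eq_intros simp: field_simps)
qed

text \<open>
  Locally uniform domination of the terms by a multiple of 1 / (n + 1)^2, via
  |Ln (1 + w)| <= 2 |w| for |w| < 1/2.
\<close>

lemma log_g_cx_series_exists:
  "\<exists>L L'. \<forall>x \<in> halfplane. ((\<lambda>k. log_factor k x) sums L x)
     \<and> ((\<lambda>k. 1 / (complex_of_real (root_sq k) + x)) sums L' x)
     \<and> (L has_field_derivative L' x) (at x)"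
proof (rule series_and_derivative_comparison_local[OF open_halfplane has_field_derivative_log_factor])
  fix x assume x: "x \<in> halfplane"
  define M where "M = cmod x + 1"
  define h where "h n = 2 * M / pi\<^sup>2 * (1 / (real n + 1)\<^sup>2)" for n
  have "summable (\<lambda>n. 1 / (real n + 1)\<^sup>2)"
    using inverse_squares_sums by (simp add: sums_iff add.commute)
  hence "summable h" unfolding h_def by (rule summable_mult)
  moreover have "\<forall>\<^sub>F n in sequentially. \<forall>y\<in>ball x 1 \<inter> halfplane. cmod (log_factor n y) \<le> h n"
  proof (rule eventually_sequentiallyI[of "nat \<lceil>M\<rceil>"], intro ballI)
    fix n y assume n: "nat \<lceil>M\<rceil> \<le> n" and y: "y \<in> ball x 1 \<inter> halfplane"
    have root_sq_eq: "root_sq n = (real n + 1)\<^sup>2 * pi\<^sup>2"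
      by (simp add: root_sq_def power_mult_distrib)
    have "cmod y \<le> M" using y unfolding M_def
      by (smt (verit) dist_norm mem_ball Int_iff norm_triangle_ineq2 dist_commute)
    hence y_small: "cmod (y / complex_of_real (root_sq n)) \<le> M / root_sq n"
      using root_sq_pos[of n] by (simp add: norm_divide divide_right_mono)
    have "pi\<^sup>2 \<ge> 3\<^sup>2" using pi_gt3 by (intro power_mono) auto
    moreover have "(real n + 1)\<^sup>2 \<ge> real n + 1" by (simp add: power2_eq_square)
    ultimately have "(real n + 1)\<^sup>2 * pi\<^sup>2 \<ge> (real n + 1) * 9" by (intro mult_mono) auto
    hence "root_sq n > 2 * M" using n root_sq_eq by (simp add: M_def) linarith
    hence "M / root_sq n < 1/2" using root_sq_pos[of n] by (simp add: field_simps)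
    hence "cmod (log_factor n y) \<le> 2 * cmod (y / complex_of_real (root_sq n))"
      unfolding log_factor_def using y_small by (intro norm_Ln_le) linarith
    also have "\<dots> \<le> 2 * (M / root_sq n)" using y_small by simp
    also have "\<dots> = h n" by (simp add: h_def root_sq_eq)
    finally show "cmod (log_factor n y) \<le> h n" .
  qed
  ultimately show "\<exists>d h. 0 < d \<and> summable h \<and>
      (\<forall>\<^sub>F n in sequentially. \<forall>y\<in>ball x d \<inter> halfplane. cmod (log_factor n y) \<le> h n)"
    by (intro exI[of _ 1] exI[of _ h]) auto
qed

lemma
  assumes "x \<in> halfplane"
  shows log_g_cx_sums: "(\<lambda>k. log_factor k x) sums log_g_cx x"
    and log_g_cx_deriv_sums: "(\<lambda>k. 1 / (complex_of_real (root_sq k) + x)) sums log_g_cx_deriv x"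
    and has_field_derivative_log_g_cx: "(log_g_cx has_field_derivative log_g_cx_deriv x) (at x)"
proof -
  obtain L L' where LL': "\<forall>x \<in> halfplane. ((\<lambda>k. log_factor k x) sums L x)
     \<and> ((\<lambda>k. 1 / (complex_of_real (root_sq k) + x)) sums L' x) \<and> (L has_field_derivative L' x) (at x)"
    using log_g_cx_series_exists by blast
  have L: "L y = log_g_cx y" and L': "L' y = log_g_cx_deriv y" if "y \<in> halfplane" for y
    using LL' that unfolding log_g_cx_def log_g_cx_deriv_def by (metis sums_unique)+
  show "(\<lambda>k. log_factor k x) sums log_g_cx x"
    and "(\<lambda>k. 1 / (complex_of_real (root_sq k) + x)) sums log_g_cx_deriv x"
    using LL' assms L L' by metis+
  have "(L has_field_derivative log_g_cx_deriv x) (at x)" using LL' assms L' by metis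
  thus "(log_g_cx has_field_derivative log_g_cx_deriv x) (at x)"
    using has_field_derivative_transform_within_open[OF _ open_halfplane assms] L by blast
qed

lemma holomorphic_log_g_cx: "log_g_cx holomorphic_on halfplane"
  using has_field_derivative_log_g_cx open_halfplane
  by (auto simp: holomorphic_on_open field_differentiable_def)

lemma holomorphic_g_cx: "g_cx holomorphic_on halfplane"
  unfolding g_cx_def by (intro holomorphic_intros holomorphic_log_g_cx)

lemma Re_log_g_cx_diff_mult_cnj_pos:
  assumes a: "a \<in> halfplane" and b: "b \<in> halfplane" and ab: "a \<noteq> b"
  shows "Re ((log_g_cx b - log_g_cx a) * cnj (b - a)) > 0"
proof -
  define t where "t k = Re ((log_factor k b - log_factor k a) * cnj (b - a))" for k
  have "(\<lambda>k. (log_factor k b - log_factor k a) * cnj (b - a)) sums ((log_g_cx b - log_g_cx a) * cnj (b - a))"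
    by (intro sums_mult2 sums_diff log_g_cx_sums a b)
  hence t_sums: "t sums Re ((log_g_cx b - log_g_cx a) * cnj (b - a))"
    unfolding t_def sums_complex_iff by simp
  have "t k > 0" for k
  proof -
    define c where "c = complex_of_real (root_sq k)"
    define u v where "u = 1 + b / c" and "v = 1 + a / c"
    have c: "c \<noteq> 0" "cnj c = c" using root_sq_pos[of k] by (auto simp: c_def)
    have "cnj (b - a) = c * cnj (u - v)" using c by (simp add: u_def v_def field_simps)
    moreover have "log_factor k b - log_factor k a = Ln u - Ln v"
      by (simp add: log_factor_def u_def v_def c_def)
    ultimately have "t k = Re ((Ln u - Ln v) * (c * cnj (u - v)))" by (simp only: t_def)
    also have "\<dots> = root_sq k * Re ((Ln u - Ln v) * cnj (u - v))"
      by (simp add: c_def mult.left_commute[of _ "complex_of_real _"])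
    finally have "t k = root_sq k * Re ((Ln u - Ln v) * cnj (u - v))" .
    moreover have "Re ((Ln u - Ln v) * cnj (u - v)) > 0"
    proof (rule Re_Ln_diff_mult_cnj_pos)
      show "Re u > 0" "Re v > 0"
        using Re_one_plus_div_root_sq_pos[OF b, of k] Re_one_plus_div_root_sq_pos[OF a, of k]
        by (simp_all add: u_def v_def c_def)
      show "u \<noteq> v" using ab c by (auto simp: u_def v_def)
    qed
    ultimately show ?thesis using root_sq_pos[of k] by simp
  qed
  thus ?thesis using suminf_pos[of t] t_sums by (simp add: sums_iff)
qed

lemma inj_on_log_g_cx: "inj_on log_g_cx halfplane"
  by (rule inj_onI, rule ccontr) (use Re_log_g_cx_diff_mult_cnj_pos in fastforce)

lemma log_g_cx_0: "log_g_cx 0 = 0"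
  by (simp add: log_g_cx_def log_factor_def)

lemma g_cx_0: "g_cx 0 = 1"
  by (simp add: g_cx_def log_g_cx_0)

lemma has_field_derivative_g_cx:
  "r \<in> halfplane \<Longrightarrow> (g_cx has_field_derivative g_cx r * log_g_cx_deriv r) (at r)"
  unfolding g_cx_def by (auto intro!: derivative_eq_intros has_field_derivative_log_g_cx)

lemma log_g_cx_deriv_0: "log_g_cx_deriv 0 = 1 / 6"
proof -
  have "(\<lambda>k. 1 / (complex_of_real (root_sq k) + 0)) = (\<lambda>k. of_real (1 / pi\<^sup>2 * (1 / (real k + 1)\<^sup>2)))"
    by (auto simp: root_sq_def power_mult_distrib add.commute)
  moreover have "(\<lambda>k. 1 / pi\<^sup>2 * (1 / (real k + 1)\<^sup>2)) sums (1 / pi\<^sup>2 * (pi\<^sup>2 / 6))"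
    using inverse_squares_sums by (intro sums_mult) (simp add: add.commute)
  ultimately have "(\<lambda>k. 1 / (complex_of_real (root_sq k) + 0)) sums of_real (1 / pi\<^sup>2 * (pi\<^sup>2 / 6))"
    by (simp only: sums_of_real)
  thus ?thesis using log_g_cx_deriv_sums[OF zero_in_halfplane] sums_unique2 by fastforce
qed

lemma g_cx_product_tendsto:
  assumes r: "r \<in> halfplane"
  shows "(\<lambda>n. \<Prod>k<n. (1 + r / complex_of_real (root_sq k))) \<longlonglongrightarrow> g_cx r"
proof -
  have "(\<lambda>n. exp (\<Sum>k<n. log_factor k r)) \<longlonglongrightarrow> g_cx r"
    using log_g_cx_sums[OF r] unfolding g_cx_def sums_def by (intro tendsto_intros)
  moreover have "exp (log_factor k r) = 1 + r / complex_of_real (root_sq k)" for k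
  proof -
    have "1 + r / complex_of_real (root_sq k) \<noteq> 0"
      using Re_one_plus_div_root_sq_pos[OF r, of k] by force
    thus ?thesis by (simp add: log_factor_def)
  qed
  ultimately show ?thesis by (simp add: exp_sum)
qed

text \<open>Euler's product for the sine, at the point \<i> q / pi.\<close>

lemma g_cx_square:
  fixes q :: complex
  assumes q: "q \<noteq> 0" and r: "q\<^sup>2 \<in> halfplane"
  shows "g_cx (q\<^sup>2) = sinh q / q"
proof -
  define z where "z = \<i> * q / complex_of_real pi"
  have pi_z: "complex_of_real pi * z = \<i> * q" by (simp add: z_def)
  have "sin (\<i> * q) = \<i> * sinh q"
    by (simp add: sin_i_times sinh_def exp_minus scaleR_conv_of_real field_simps)
  hence "(\<lambda>n. \<i> * q * (\<Prod>k=1..n. 1 - z\<^sup>2 / (of_nat k)\<^sup>2)) \<longlonglongrightarrow> \<i> * sinh q"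
    using sin_product_formula_complex[of z] pi_z by simp
  moreover have "(\<Prod>k=1..n. 1 - z\<^sup>2 / (of_nat k)\<^sup>2) = (\<Prod>k<n. (1 + q\<^sup>2 / complex_of_real (root_sq k)))" for n
  proof -
    have "(\<Prod>k=1..n. 1 - z\<^sup>2 / (of_nat k)\<^sup>2) = (\<Prod>k<n. 1 - z\<^sup>2 / (of_nat (Suc k))\<^sup>2)"
      using prod.shift_bounds_Suc_ivl[of "\<lambda>k. 1 - z\<^sup>2 / (of_nat k)\<^sup>2" 0 n]
      by (simp add: atLeastLessThanSuc_atLeastAtMost atLeast0LessThan)
    also have "\<dots> = (\<Prod>k<n. (1 + q\<^sup>2 / complex_of_real (root_sq k)))"
    proof (intro prod.cong refl)
      fix k
      have z2: "z\<^sup>2 = - (q\<^sup>2) / (complex_of_real pi)\<^sup>2"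
        by (simp add: z_def power_divide power_mult_distrib)
      have root: "complex_of_real (root_sq k) = (of_nat (Suc k))\<^sup>2 * (complex_of_real pi)\<^sup>2"
        by (simp add: root_sq_def power_mult_distrib)
      show "1 - z\<^sup>2 / (of_nat (Suc k))\<^sup>2 = 1 + q\<^sup>2 / complex_of_real (root_sq k)"
        unfolding z2 root by (simp add: field_simps del: of_nat_Suc)
    qed
    finally show ?thesis .
  qed
  ultimately have "(\<lambda>n. \<i> * q * (\<Prod>k<n. (1 + q\<^sup>2 / complex_of_real (root_sq k))) / (\<i> * q))
      \<longlonglongrightarrow> \<i> * sinh q / (\<i> * q)"
    by (intro tendsto_divide tendsto_const) (use q in auto)
  hence "(\<lambda>n. \<Prod>k<n. (1 + q\<^sup>2 / complex_of_real (root_sq k))) \<longlonglongrightarrow> sinh q / q"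
    using q by simp
  thus ?thesis using g_cx_product_tendsto[OF r] LIMSEQ_unique by blast
qed

lemma log_g_cx_cnj:
  assumes z: "z \<in> halfplane"
  shows "log_g_cx (cnj z) = cnj (log_g_cx z)"
proof -
  have "log_factor k (cnj z) = cnj (log_factor k z)" for k
    using cnj_Ln[OF one_plus_div_root_sq_nonpos_Reals[OF z]] by (simp add: log_factor_def)
  hence "(\<lambda>k. log_factor k (cnj z)) sums cnj (log_g_cx z)"
    using sums_cnj[THEN iffD2, OF log_g_cx_sums[OF z]] by simp
  thus ?thesis using log_g_cx_sums[of "cnj z"] z sums_unique2 by auto
qed

subsection \<open>Estimates for sinh\<close>

lemma pi_sq_bounds: "9 < pi\<^sup>2" "pi\<^sup>2 < 16"
proof -
  have "3\<^sup>2 < pi\<^sup>2" using pi_gt3 by (intro power_strict_mono) auto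
  moreover have "pi\<^sup>2 < 4\<^sup>2" using pi_less_4 pi_gt_zero by (intro power_strict_mono) auto
  ultimately show "9 < pi\<^sup>2" "pi\<^sup>2 < 16" by simp_all
qed

lemma sinh_cos_cosh_sin_bound_middle:
  fixes a b :: real
  assumes a: "a \<ge> 0" and ab: "b\<^sup>2 = a\<^sup>2 + pi\<^sup>2" and b: "3 * pi / 2 < b" "b < 2 * pi"
  shows "2 * a * sinh a * cos b + 2 * b * cosh a * sin b \<le> (sinh a)\<^sup>2 + (sin b)\<^sup>2"
proof -
  have "b\<^sup>2 \<ge> (3 * pi / 2)\<^sup>2" using b pi_gt_zero by (intro power_mono) auto
  hence "a\<^sup>2 \<ge> 11" using ab pi_sq_bounds by (simp add: power_mult_distrib power_divide)
  hence "a * a\<^sup>2 \<ge> a * 11" using a by (intro mult_left_mono) auto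
  hence "a ^ 3 / 6 \<ge> 11 / 6 * a" by (simp add: power3_eq_cube power2_eq_square mult.assoc)
  moreover have "a ^ 5 / 120 \<ge> 0" using a by simp
  ultimately have "sinh a \<ge> 2 * a" using sinh_ge_taylor_5[OF a] a by linarith
  hence "2 * a * sinh a \<le> sinh a * sinh a" using a by (simp add: mult_right_mono)
  moreover have "2 * a * sinh a * cos b \<le> 2 * a * sinh a" using a by (simp add: mult_left_le)
  ultimately have "2 * a * sinh a * cos b \<le> (sinh a)\<^sup>2" by (simp add: power2_eq_square)
  moreover have "sin b \<le> 0" using b pi_gt_zero by (intro sin_le_zero) auto
  hence "b * cosh a * sin b \<le> 0"
    using b pi_gt_zero by (intro mult_nonneg_nonpos) auto
  ultimately show ?thesis using zero_le_power2[of "sin b"] by linarith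
qed

lemma sinh_cos_cosh_sin_bound_large:
  fixes a b :: real
  assumes a: "a \<ge> 0" and ab: "b\<^sup>2 = a\<^sup>2 + pi\<^sup>2" and b: "2 * pi \<le> b"
  shows "2 * a * sinh a * cos b + 2 * b * cosh a * sin b \<le> (sinh a)\<^sup>2 + (sin b)\<^sup>2"
proof -
  have b0: "b \<ge> 0" using b pi_gt_zero by linarith
  have "b\<^sup>2 \<ge> (2 * pi)\<^sup>2" using b pi_gt_zero by (intro power_mono) auto
  hence a27: "a\<^sup>2 \<ge> 27" using ab pi_sq_bounds by (simp add: power_mult_distrib)
  hence "a \<ge> 5" using power2_le_iff_abs_le[OF a, of 5] by simp
  moreover have "a ^ 3 / 6 \<ge> 4.5 * a"
    using mult_left_mono[OF a27 a] by (simp add: power3_eq_cube power2_eq_square mult.assoc)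
  moreover have "a ^ 5 / 120 \<ge> 6 * a"
  proof -
    have "(a\<^sup>2)\<^sup>2 \<ge> 27\<^sup>2" using a27 by (intro power_mono) auto
    hence "a * a ^ 4 \<ge> a * 729" using a by (intro mult_left_mono) (auto simp: power_mult[symmetric])
    hence "a ^ 5 \<ge> 729 * a" by (simp add: power_Suc[symmetric] mult.commute)
    thus ?thesis using a by linarith
  qed
  ultimately have sinh_a: "sinh a \<ge> 4 * a + 10" using sinh_ge_taylor_5[OF a] by linarith
  have "b\<^sup>2 \<le> (a + pi)\<^sup>2" using ab a pi_gt_zero by (simp add: power2_sum)
  hence "b \<le> a + pi" using a pi_gt_zero by (simp add: power2_le_iff_abs_le)
  hence "b \<le> a + 4" using pi_less_4 by linarith
  moreover have "cosh a \<le> sinh a + 1" using cosh_minus_sinh[of a] a by (simp add: field_simps)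
  ultimately have "b * cosh a \<le> (a + 4) * (sinh a + 1)"
    using a b0 by (intro mult_mono) simp_all
  moreover have "a * sinh a + (a + 4) * (sinh a + 1) \<le> (sinh a)\<^sup>2 / 2"
  proof -
    have "(sinh a)\<^sup>2 \<ge> (4 * a + 10) * sinh a"
      using sinh_a a by (simp add: power2_eq_square mult_right_mono)
    thus ?thesis using sinh_a a by (simp add: algebra_simps)
  qed
  moreover have "a * sinh a * cos b \<le> a * sinh a" using a by (simp add: mult_left_le)
  moreover have "b * cosh a * sin b \<le> b * cosh a"
    using b0 by (intro mult_left_le) simp_all
  ultimately show ?thesis using zero_le_power2[of "sinh a"] zero_le_power2[of "sin b"] by linarith
qed

lemma sinh_cos_cosh_sin_bound:
  fixes a b :: real
  assumes ab: "b\<^sup>2 = a\<^sup>2 + pi\<^sup>2"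
  shows "2 * a * sinh a * cos b + 2 * b * cosh a * sin b \<le> (sinh a)\<^sup>2 + (sin b)\<^sup>2"
proof -
  define A B where "A = \<bar>a\<bar>" and "B = \<bar>b\<bar>"
  have A: "A \<ge> 0" and AB: "B\<^sup>2 = A\<^sup>2 + pi\<^sup>2" using ab by (simp_all add: A_def B_def)
  have "B \<ge> pi" using power2_le_iff_abs_le[of B pi] AB by (simp add: B_def)
  have "2 * A * sinh A * cos B + 2 * B * cosh A * sin B \<le> (sinh A)\<^sup>2 + (sin B)\<^sup>2"
  proof -
    consider "B \<le> 3 * pi / 2" | "3 * pi / 2 < B" "B < 2 * pi" | "2 * pi \<le> B" by linarith
    thus ?thesis
    proof cases
      case 1
      have "cos (B - pi) \<ge> 0" "sin (B - pi) \<ge> 0"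
        using 1 \<open>B \<ge> pi\<close> by (intro cos_ge_zero sin_ge_zero; simp)+
      moreover have "A * sinh A \<ge> 0" "B * cosh A \<ge> 0" using A by (simp_all add: B_def)
      ultimately have "A * sinh A * cos B \<le> 0" "B * cosh A * sin B \<le> 0"
        by (simp_all add: mult_nonneg_nonpos)
      thus ?thesis using zero_le_power2[of "sinh A"] zero_le_power2[of "sin B"] by linarith
    qed (use A AB sinh_cos_cosh_sin_bound_middle sinh_cos_cosh_sin_bound_large in auto)
  qed
  moreover have "A * sinh A * cos B = a * sinh a * cos b" "B * cosh A * sin B = b * cosh a * sin b"
    by (cases "a \<ge> 0"; cases "b \<ge> 0"; simp add: A_def B_def)+
  moreover have "(sinh A)\<^sup>2 = (sinh a)\<^sup>2" "(sin B)\<^sup>2 = (sin b)\<^sup>2"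
    by (cases "a \<ge> 0"; cases "b \<ge> 0"; simp add: A_def B_def)+
  ultimately show ?thesis by (simp add: mult.assoc)
qed

lemma norm_sinh_minus_ge_on_boundary:
  fixes q :: complex
  assumes "Re (q\<^sup>2) = - (pi\<^sup>2)"
  shows "cmod (sinh q - q) \<ge> cmod q"
proof -
  define a b where "a = Re q" and "b = Im q"
  have ab: "b\<^sup>2 = a\<^sup>2 + pi\<^sup>2" using assms by (simp add: a_def b_def power2_eq_square)
  have "(cmod (sinh q - q))\<^sup>2 = (sinh a * cos b - a)\<^sup>2 + (cosh a * sin b - b)\<^sup>2"
    by (simp add: cmod_power2 Re_sinh Im_sinh a_def b_def)
  also have "\<dots> = (sinh a)\<^sup>2 + (sin b)\<^sup>2 + a\<^sup>2 + b\<^sup>2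
      - (2 * a * sinh a * cos b + 2 * b * cosh a * sin b)"
    by (simp add: power2_diff power_mult_distrib cosh_square_eq cos_squared_eq algebra_simps)
  also have "\<dots> \<ge> a\<^sup>2 + b\<^sup>2" using sinh_cos_cosh_sin_bound[OF ab] by linarith
  finally have "(cmod q)\<^sup>2 \<le> (cmod (sinh q - q))\<^sup>2" by (simp add: cmod_power2 a_def b_def)
  thus ?thesis by (simp add: power2_le_iff_abs_le)
qed

lemma norm_sinh_ge_double:
  fixes q :: complex
  assumes re: "Re (q\<^sup>2) \<ge> - (pi\<^sup>2)" and big: "cmod q \<ge> 7"
  shows "cmod (sinh q) \<ge> 2 * cmod q"
proof -
  define A b where "A = \<bar>Re q\<bar>" and "b = Im q"
  have A: "A \<ge> 0" by (simp add: A_def)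
  have b2: "b\<^sup>2 \<le> A\<^sup>2 + pi\<^sup>2" using re by (simp add: A_def b_def power2_eq_square)
  have q2: "(cmod q)\<^sup>2 = A\<^sup>2 + b\<^sup>2" by (simp add: cmod_power2 A_def b_def)
  have "(cmod q)\<^sup>2 \<ge> 7\<^sup>2" using big by (intro power_mono) auto
  hence A2: "A\<^sup>2 \<ge> 33 / 2" using q2 b2 pi_sq_bounds by simp
  have "A ^ 3 / 6 \<ge> 11 / 4 * A"
    using mult_left_mono[OF A2 A] by (simp add: power3_eq_cube power2_eq_square mult.assoc)
  moreover have "A ^ 5 / 120 \<ge> 9 / 4 * A"
  proof -
    have "(A\<^sup>2)\<^sup>2 \<ge> (33 / 2)\<^sup>2" using A2 by (intro power_mono) auto
    hence "A ^ 4 \<ge> (33 / 2)\<^sup>2" by (simp add: power_mult[symmetric])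
    moreover have "((33 / 2)::real)\<^sup>2 \<ge> 272" by (simp add: power2_eq_square)
    ultimately have "A * A ^ 4 \<ge> A * 272" using A by (intro mult_left_mono) auto
    hence "A ^ 5 \<ge> 272 * A" by (simp add: power_Suc[symmetric] mult.commute)
    thus ?thesis using A by linarith
  qed
  ultimately have "sinh A \<ge> 5 * A" using sinh_ge_taylor_5[OF A] A by linarith
  have "(2 * cmod q)\<^sup>2 = 4 * A\<^sup>2 + 4 * b\<^sup>2" by (simp add: power_mult_distrib q2)
  also have "\<dots> \<le> 25 * A\<^sup>2" using b2 A2 pi_sq_bounds by linarith
  also have "\<dots> \<le> (sinh A)\<^sup>2"
    using A \<open>sinh A \<ge> 5 * A\<close> power_mono[of "5 * A" "sinh A" 2] by (simp add: power_mult_distrib)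
  also have "\<dots> \<le> (cmod (sinh q))\<^sup>2" by (simp add: A_def norm_sinh_squared)
  finally have "(2 * cmod q)\<^sup>2 \<le> (cmod (sinh q))\<^sup>2" .
  thus ?thesis using power2_le_iff_abs_le[of "cmod (sinh q)" "2 * cmod q"] by simp
qed

lemma norm_sinh_div_minus_1_ge:
  fixes q :: complex
  assumes "q \<noteq> 0" and "cmod (sinh q - q) \<ge> cmod q"
  shows "cmod (sinh q / q - 1) \<ge> 1"
proof -
  have "sinh q / q - 1 = (sinh q - q) / q" using assms(1) by (simp add: field_simps)
  thus ?thesis using assms by (simp add: norm_divide)
qed

lemma norm_g_cx_minus_1_ge:
  assumes r: "r \<in> halfplane" and big: "cmod r \<ge> 49"
  shows "cmod (g_cx r - 1) \<ge> 1"
proof -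
  define q where "q = csqrt r"
  have qr: "q\<^sup>2 = r" by (simp add: q_def)
  have "(cmod q)\<^sup>2 \<ge> 7\<^sup>2" using big by (simp flip: qr add: norm_power)
  hence q7: "cmod q \<ge> 7" using power2_le_iff_abs_le[of "cmod q" 7] by simp
  hence "q \<noteq> 0" by auto
  moreover have "cmod (sinh q) \<ge> 2 * cmod q"
    using r q7 by (intro norm_sinh_ge_double) (simp_all add: qr halfplane_def)
  hence "cmod (sinh q - q) \<ge> cmod q" using norm_triangle_ineq2[of "sinh q" q] by linarith
  ultimately show ?thesis using g_cx_square[of q] r qr norm_sinh_div_minus_1_ge by auto
qed

subsection \<open>The image of the logarithm of g\<close>

lemma Re_pos_of_mem_ball_1_1:
  assumes "w \<in> ball 1 1"
  shows "Re w > 0"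
proof -
  have "\<bar>Re (1 - w)\<bar> < 1"
    using assms abs_Re_le_cmod[of "1 - w"] by (simp add: dist_norm)
  thus ?thesis by simp
qed

lemma holomorphic_Ln_ball_1_1: "Ln holomorphic_on ball 1 1"
  by (intro holomorphic_intros) (auto dest!: Re_pos_of_mem_ball_1_1 simp: complex_nonpos_Reals_iff)

lemma connected_Ln_ball_1_1: "connected (Ln ` ball 1 1)"
  by (intro connected_continuous_image holomorphic_on_imp_continuous_on holomorphic_Ln_ball_1_1) auto

lemma exp_mem_ball_1_1:
  assumes "x \<in> Ln ` ball 1 1"
  shows "exp x \<in> ball 1 1"
proof -
  obtain w where "w \<in> ball 1 1" "x = Ln w" using assms by blast
  moreover have "w \<noteq> 0" using Re_pos_of_mem_ball_1_1[OF \<open>w \<in> ball 1 1\<close>] by auto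
  ultimately show ?thesis by simp
qed

text \<open>
  Boundedness comes from norm_g_cx_minus_1_ge, and a limit on the line Re r = -pi^2 is excluded
  by norm_sinh_minus_ge_on_boundary. The subsequence is extracted from the square roots, because
  csqrt is discontinuous across the negative real axis, which that line crosses.
\<close>

lemma convergent_subseq_in_halfplane:
  fixes rr :: "nat \<Rightarrow> complex"
  assumes rr: "\<And>n. rr n \<in> halfplane" and ball: "\<And>n. g_cx (rr n) \<in> ball 1 1"
    and lim: "(\<lambda>n. g_cx (rr n)) \<longlonglongrightarrow> w" and w: "w \<in> ball 1 1"
  obtains s r where "strict_mono s" "(rr \<circ> s) \<longlonglongrightarrow> r" "r \<in> halfplane"
proof -
  define qq where "qq n = csqrt (rr n)" for n
  have qq2: "(qq n)\<^sup>2 = rr n" for n by (simp add: qq_def)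
  have "qq n \<in> cball 0 7" for n
  proof -
    have "cmod (g_cx (rr n) - 1) < 1"
      using ball[of n] by (simp add: dist_norm norm_minus_commute)
    hence "cmod (rr n) < 49" using norm_g_cx_minus_1_ge[OF rr, of n] by linarith
    hence "(cmod (qq n))\<^sup>2 < 7\<^sup>2" by (simp flip: qq2 add: norm_power)
    thus ?thesis using power2_le_iff_abs_le[of 7 "cmod (qq n)"] by simp
  qed
  then obtain q s where s: "strict_mono s" and qs: "(qq \<circ> s) \<longlonglongrightarrow> q"
    using compact_imp_seq_compact[OF compact_cball, THEN seq_compactE] by metis
  have rs: "(rr \<circ> s) \<longlonglongrightarrow> q\<^sup>2"
    using tendsto_power[OF qs, of 2] by (simp add: o_def qq2)
  have "Re (q\<^sup>2) \<ge> - (pi\<^sup>2)"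
    by (rule tendsto_lowerbound[OF tendsto_Re[OF rs]]) (use rr in \<open>auto simp: halfplane_def less_imp_le\<close>)
  moreover have "Re (q\<^sup>2) \<noteq> - (pi\<^sup>2)"
  proof
    assume boundary: "Re (q\<^sup>2) = - (pi\<^sup>2)"
    hence q0: "q \<noteq> 0" by auto
    have "(\<lambda>n. sinh ((qq \<circ> s) n) / (qq \<circ> s) n) \<longlonglongrightarrow> sinh q / q"
      by (intro tendsto_intros qs q0)
    moreover have "\<forall>\<^sub>F n in sequentially. (qq \<circ> s) n \<noteq> 0"
      using qs q0 by (rule tendsto_imp_eventually_ne)
    hence "\<forall>\<^sub>F n in sequentially. sinh ((qq \<circ> s) n) / (qq \<circ> s) n = (g_cx \<circ> rr \<circ> s) n"
      by eventually_elim (use g_cx_square rr in \<open>auto simp flip: qq2\<close>)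
    ultimately have "(g_cx \<circ> rr \<circ> s) \<longlonglongrightarrow> sinh q / q" by (rule Lim_transform_eventually)
    moreover have "(g_cx \<circ> rr \<circ> s) \<longlonglongrightarrow> w"
      using LIMSEQ_subseq_LIMSEQ[OF lim s] by (simp add: o_def)
    ultimately have "w = sinh q / q" using LIMSEQ_unique by blast
    hence "cmod (w - 1) \<ge> 1"
      using norm_sinh_div_minus_1_ge[OF q0 norm_sinh_minus_ge_on_boundary[OF boundary]] by simp
    thus False using w by (simp add: dist_norm norm_minus_commute)
  qed
  ultimately show thesis using that[OF s rs] by (simp add: halfplane_def)
qed

lemma limit_point_in_log_g_cx_image:
  assumes x: "x \<in> Ln ` ball 1 1" and limpt: "x islimpt (Ln ` ball 1 1 \<inter> log_g_cx ` halfplane)"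
  shows "x \<in> log_g_cx ` halfplane"
proof -
  obtain \<sigma> where \<sigma>: "\<And>n. \<sigma> n \<in> log_g_cx ` halfplane" and \<sigma>_lim: "\<sigma> \<longlonglongrightarrow> x"
    using limpt unfolding islimpt_sequential by blast
  have "\<forall>n. \<exists>r. r \<in> halfplane \<and> \<sigma> n = log_g_cx r" using \<sigma> by blast
  then obtain rr where rr: "\<And>n. rr n \<in> halfplane" and \<sigma>_eq: "\<And>n. \<sigma> n = log_g_cx (rr n)"
    by metis
  have g_lim: "(\<lambda>n. g_cx (rr n)) \<longlonglongrightarrow> exp x"
    using tendsto_exp[OF \<sigma>_lim] by (simp add: \<sigma>_eq g_cx_def)
  have x_ball: "exp x \<in> ball 1 1" by (rule exp_mem_ball_1_1[OF x])
  obtain N where N: "\<And>n. n \<ge> N \<Longrightarrow> g_cx (rr n) \<in> ball 1 1"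
    using topological_tendstoD[OF g_lim open_ball x_ball] by (auto simp: eventually_sequentially)
  obtain s r where s: "strict_mono s" and rs: "((\<lambda>n. rr (n + N)) \<circ> s) \<longlonglongrightarrow> r"
    and r: "r \<in> halfplane"
  proof (rule convergent_subseq_in_halfplane[of "\<lambda>n. rr (n + N)"])
    show "(\<lambda>n. g_cx (rr (n + N))) \<longlonglongrightarrow> exp x"
      using LIMSEQ_ignore_initial_segment[OF g_lim] .
    show "rr (n + N) \<in> halfplane" "g_cx (rr (n + N)) \<in> ball 1 1" for n
      using rr N[of "n + N"] by simp_all
  qed (use x_ball in simp_all)
  define t where "t n = s n + N" for n
  have t: "strict_mono t" using s by (simp add: strict_mono_def t_def)
  have "(rr \<circ> t) \<longlonglongrightarrow> r" using rs by (simp add: t_def o_def)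
  hence "(\<lambda>n. log_g_cx ((rr \<circ> t) n)) \<longlonglongrightarrow> log_g_cx r"
    by (rule continuous_on_tendsto_compose[OF holomorphic_on_imp_continuous_on[OF holomorphic_log_g_cx] _ r])
       (simp add: rr)
  moreover have "(\<lambda>n. log_g_cx ((rr \<circ> t) n)) \<longlonglongrightarrow> x"
    using LIMSEQ_subseq_LIMSEQ[OF \<sigma>_lim t] by (simp add: \<sigma>_eq o_def)
  ultimately have "x = log_g_cx r" using LIMSEQ_unique by blast
  thus ?thesis using r by blast
qed

lemma Ln_ball_1_1_subset_log_g_cx_image: "Ln ` ball 1 1 \<subseteq> log_g_cx ` halfplane"
proof -
  define T where "T = Ln ` ball 1 1 \<inter> log_g_cx ` halfplane"
  have "openin (top_of_set (Ln ` ball 1 1)) T"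
    unfolding T_def using holomorphic_log_g_cx open_halfplane inj_on_log_g_cx
    by (intro openin_open_Int open_mapping_thm3)
  moreover have "closedin (top_of_set (Ln ` ball 1 1)) T"
    unfolding closedin_limpt T_def using limit_point_in_log_g_cx_image by blast
  moreover have "0 \<in> T"
    using zero_in_halfplane log_g_cx_0 unfolding T_def by (force intro: image_eqI[of 0 _ 1])
  ultimately have "T = Ln ` ball 1 1" using connected_Ln_ball_1_1 unfolding connected_clopen by blast
  thus ?thesis unfolding T_def by blast
qed

subsection \<open>A holomorphic extension of F to the unit disc\<close>

definition r_cx :: "complex \<Rightarrow> complex" where
  "r_cx \<xi> = inv_into halfplane log_g_cx (Ln (1 - \<xi>))"

text \<open>
  c_cx r is cosh (sqrt r) (see c_cx_square); written through g and its derivative it is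
  holomorphic on the half-plane without choosing a branch of the square root.
\<close>

definition c_cx :: "complex \<Rightarrow> complex" where
  "c_cx r = g_cx r + 2 * r * deriv g_cx r"

definition h_cx :: "complex \<Rightarrow> complex" where
  "h_cx r = 2 - 2 * c_cx r + r * g_cx r"

definition F_cx :: "complex \<Rightarrow> complex" where
  "F_cx \<xi> = h_cx (r_cx \<xi>)"

lemma one_minus_mem_ball_1_1: "(\<xi>::complex) \<in> ball 0 1 \<Longrightarrow> 1 - \<xi> \<in> ball 1 1"
  by (simp add: dist_norm norm_minus_commute)

lemma
  assumes "\<xi> \<in> ball 0 1"
  shows r_cx_in_halfplane: "r_cx \<xi> \<in> halfplane"
    and log_g_cx_r_cx: "log_g_cx (r_cx \<xi>) = Ln (1 - \<xi>)"
    and g_cx_r_cx: "g_cx (r_cx \<xi>) = 1 - \<xi>"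
proof -
  have "Ln (1 - \<xi>) \<in> log_g_cx ` halfplane"
    using Ln_ball_1_1_subset_log_g_cx_image one_minus_mem_ball_1_1[OF assms] by blast
  thus "r_cx \<xi> \<in> halfplane" and L: "log_g_cx (r_cx \<xi>) = Ln (1 - \<xi>)"
    unfolding r_cx_def by (auto intro: inv_into_into f_inv_into_f)
  have "1 - \<xi> \<noteq> 0" using Re_pos_of_mem_ball_1_1[OF one_minus_mem_ball_1_1[OF assms]] by auto
  thus "g_cx (r_cx \<xi>) = 1 - \<xi>" by (simp add: g_cx_def L)
qed

lemma r_cx_0: "r_cx 0 = 0"
  using inv_into_f_f[OF inj_on_log_g_cx zero_in_halfplane] by (simp add: r_cx_def log_g_cx_0)

lemma holomorphic_r_cx: "r_cx holomorphic_on ball 0 1"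
proof -
  obtain g where g: "g holomorphic_on log_g_cx ` halfplane"
    and g_inv: "\<And>z. z \<in> halfplane \<Longrightarrow> g (log_g_cx z) = z"
    using holomorphic_has_inverse[OF holomorphic_log_g_cx open_halfplane inj_on_log_g_cx] by metis
  have inv: "inv_into halfplane log_g_cx holomorphic_on log_g_cx ` halfplane"
    by (rule holomorphic_transform[OF g]) (auto simp: g_inv inv_into_f_f[OF inj_on_log_g_cx])
  have Ln: "(\<lambda>\<xi>. Ln (1 - \<xi>)) holomorphic_on ball 0 1"
  proof (intro holomorphic_intros)
    fix \<xi> :: complex assume "\<xi> \<in> ball 0 1"
    hence "Re (1 - \<xi>) > 0" by (intro Re_pos_of_mem_ball_1_1 one_minus_mem_ball_1_1)
    thus "1 - \<xi> \<notin> \<real>\<^sub>\<le>\<^sub>0" by (auto simp: complex_nonpos_Reals_iff)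
  qed
  have "(\<lambda>\<xi>. Ln (1 - \<xi>)) ` ball 0 1 \<subseteq> log_g_cx ` halfplane"
    using Ln_ball_1_1_subset_log_g_cx_image one_minus_mem_ball_1_1 by blast
  from holomorphic_on_compose_gen[OF Ln inv this] show ?thesis
    by (simp add: r_cx_def[abs_def] o_def)
qed

lemma holomorphic_h_cx: "h_cx holomorphic_on halfplane"
  unfolding h_cx_def c_cx_def
  by (intro holomorphic_intros holomorphic_g_cx holomorphic_deriv open_halfplane)

lemma holomorphic_F_cx: "F_cx holomorphic_on ball 0 1"
  unfolding F_cx_def[abs_def]
  by (rule holomorphic_on_compose_gen[OF holomorphic_r_cx holomorphic_h_cx, unfolded o_def])
     (use r_cx_in_halfplane in blast)

lemma F_cx_0: "F_cx 0 = 0"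
  by (simp add: F_cx_def r_cx_0 h_cx_def c_cx_def g_cx_0)

text \<open>Here g'(0) = 1/6 is the Basel sum, and then h'(0) = 1 - 6 g'(0) = 0.\<close>

lemma has_field_derivative_h_cx_0: "(h_cx has_field_derivative 0) (at 0)"
proof -
  have g': "(g_cx has_field_derivative deriv g_cx 0) (at 0)"
    by (rule holomorphic_derivI[OF holomorphic_g_cx open_halfplane zero_in_halfplane])
  have g'': "(deriv g_cx has_field_derivative deriv (deriv g_cx) 0) (at 0)"
    by (rule holomorphic_derivI[OF holomorphic_deriv[OF holomorphic_g_cx open_halfplane]
          open_halfplane zero_in_halfplane])
  have "(h_cx has_field_derivative
          - 2 * (deriv g_cx 0 + 2 * deriv g_cx 0 + 2 * 0 * deriv (deriv g_cx) 0)
          + (g_cx 0 + 0 * deriv g_cx 0)) (at 0)"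
    unfolding h_cx_def c_cx_def by (rule derivative_eq_intros g' g'' refl | simp)+
  moreover have "deriv g_cx 0 = 1 / 6"
    using has_field_derivative_g_cx[OF zero_in_halfplane]
    by (intro DERIV_imp_deriv) (simp add: g_cx_0 log_g_cx_deriv_0)
  ultimately show ?thesis by (simp add: g_cx_0)
qed

lemma deriv_F_cx_0: "deriv F_cx 0 = 0"
proof -
  have "(r_cx has_field_derivative deriv r_cx 0) (at 0)"
    by (intro holomorphic_derivI[OF holomorphic_r_cx]) auto
  hence "(F_cx has_field_derivative 0) (at 0)"
    using DERIV_chain[of h_cx 0 r_cx] has_field_derivative_h_cx_0
    by (simp add: F_cx_def[abs_def] o_def r_cx_0)
  thus ?thesis by (rule DERIV_imp_deriv)
qed

subsection \<open>Back to the real line\<close>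

definition cfun :: "real \<Rightarrow> real" where
  "cfun r = (if r > 0 then cosh (sqrt r) else if r = 0 then 1 else cos (sqrt (- r)))"

lemma c_cx_square:
  fixes z :: complex
  assumes z0: "z \<noteq> 0" and zH: "z\<^sup>2 \<in> halfplane"
  shows "c_cx (z\<^sup>2) = cosh z"
proof -
  define U where "U = {w. w \<noteq> 0} \<inter> (\<lambda>w::complex. w\<^sup>2) -` halfplane"
  have "open U" unfolding U_def
    by (intro open_Int continuous_open_vimage open_halfplane continuous_intros)
       (auto simp: open_Collect_neq)
  have "((\<lambda>w. g_cx (w\<^sup>2)) has_field_derivative deriv g_cx (z\<^sup>2) * (2 * z)) (at z)"
  proof (rule DERIV_chain2[of g_cx])
    show "(g_cx has_field_derivative deriv g_cx (z\<^sup>2)) (at (z\<^sup>2))"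
      by (rule holomorphic_derivI[OF holomorphic_g_cx open_halfplane zH])
    show "((\<lambda>w. w\<^sup>2) has_field_derivative 2 * z) (at z)"
      by (auto intro!: derivative_eq_intros)
  qed
  hence "((\<lambda>w. sinh w / w) has_field_derivative deriv g_cx (z\<^sup>2) * (2 * z)) (at z)"
  proof (rule has_field_derivative_transform_within_open[OF _ \<open>open U\<close>])
    show "z \<in> U" using z0 zH by (simp add: U_def)
    show "g_cx (w\<^sup>2) = sinh w / w" if "w \<in> U" for w
      using that g_cx_square[of w] by (simp add: U_def)
  qed
  moreover have "((\<lambda>w. sinh w / w) has_field_derivative (cosh z * z - sinh z) / z\<^sup>2) (at z)"
    using z0 by (auto intro!: derivative_eq_intros simp: power2_eq_square)
  ultimately have "deriv g_cx (z\<^sup>2) * (2 * z) = (cosh z * z - sinh z) / z\<^sup>2"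
    using DERIV_unique by blast
  moreover have "c_cx (z\<^sup>2) = sinh z / z + z * (deriv g_cx (z\<^sup>2) * (2 * z))"
    using g_cx_square[OF z0 zH] by (simp add: c_cx_def algebra_simps power2_eq_square)
  ultimately show ?thesis using z0 by (simp add: field_simps power2_eq_square)
qed

lemma complex_of_real_square_cases:
  fixes r :: real
  obtains "r = 0"
  | z where "z \<noteq> 0" "complex_of_real r = z\<^sup>2"
      "sinh z / z = complex_of_real (gfun r)" "cosh z = complex_of_real (cfun r)"
proof -
  consider "r > 0" | "r = 0" | "r < 0" by linarith
  thus thesis
  proof cases
    case 1
    define z where "z = complex_of_real (sqrt r)"
    have "complex_of_real r = z\<^sup>2" using 1 by (simp add: z_def flip: of_real_power)
    thus thesis using that(2)[of z] 1
      by (simp add: z_def sinh_complex_of_real cosh_complex_of_real gfun_def cfun_def)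
  next
    case 3
    define z where "z = \<i> * complex_of_real (sqrt (- r))"
    have "complex_of_real r = z\<^sup>2" using 3 by (simp add: z_def power_mult_distrib flip: of_real_power)
    thus thesis using that(2)[of z] 3
      by (simp add: z_def sinh_i_times_of_real cosh_i_times_of_real gfun_def cfun_def)
  qed (use that(1) in blast)
qed

lemma g_cx_of_real:
  assumes r: "r > - (pi\<^sup>2)"
  shows "g_cx (complex_of_real r) = complex_of_real (gfun r)"
proof (cases r rule: complex_of_real_square_cases)
  case (2 z)
  have "z\<^sup>2 \<in> halfplane" using r 2(2)[symmetric] by simp
  thus ?thesis using g_cx_square[OF 2(1)] 2 by simp
qed (simp add: g_cx_0 gfun_def)

lemma c_cx_of_real:
  assumes r: "r > - (pi\<^sup>2)"
  shows "c_cx (complex_of_real r) = complex_of_real (cfun r)"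
proof (cases r rule: complex_of_real_square_cases)
  case (2 z)
  have "z\<^sup>2 \<in> halfplane" using r 2(2)[symmetric] by simp
  thus ?thesis using c_cx_square[OF 2(1)] 2 by simp
qed (simp add: c_cx_def g_cx_0 cfun_def)

lemma log_g_cx_of_real:
  assumes "r > - (pi\<^sup>2)"
  shows "log_g_cx (complex_of_real r) = complex_of_real (Re (log_g_cx (complex_of_real r)))"
  using log_g_cx_cnj[of "complex_of_real r"] assms by (simp add: complex_eq_iff)

lemma gfun_inj_on: "inj_on gfun {- (pi\<^sup>2)<..}"
proof (rule inj_onI)
  fix r s assume r: "r \<in> {- (pi\<^sup>2)<..}" and s: "s \<in> {- (pi\<^sup>2)<..}" and eq: "gfun r = gfun s"
  define Lr Ls where "Lr = Re (log_g_cx (complex_of_real r))" and "Ls = Re (log_g_cx (complex_of_real s))"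
  have "complex_of_real (exp Lr) = complex_of_real (exp Ls)"
    using g_cx_of_real[of r] g_cx_of_real[of s] log_g_cx_of_real[of r] log_g_cx_of_real[of s] r s eq
    by (simp add: g_cx_def Lr_def Ls_def flip: exp_of_real)
  hence "log_g_cx (complex_of_real r) = log_g_cx (complex_of_real s)"
    using log_g_cx_of_real[of r] log_g_cx_of_real[of s] r s by (simp add: Lr_def Ls_def)
  thus "r = s" using inj_onD[OF inj_on_log_g_cx] r s by fastforce
qed

lemma ginv_gfun:
  assumes "r > - (pi\<^sup>2)"
  shows "ginv (gfun r) = r"
  unfolding ginv_def using assms inj_onD[OF gfun_inj_on] by (intro the_equality) auto

lemma
  fixes \<xi> :: real
  assumes "\<bar>\<xi>\<bar> < 1"
  shows r_cx_of_real: "r_cx (complex_of_real \<xi>) = complex_of_real (Re (r_cx (complex_of_real \<xi>)))"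
    and Re_r_cx_of_real_gt: "Re (r_cx (complex_of_real \<xi>)) > - (pi\<^sup>2)"
proof -
  define z where "z = r_cx (complex_of_real \<xi>)"
  have \<xi>: "complex_of_real \<xi> \<in> ball 0 1" using assms by simp
  have zH: "z \<in> halfplane" using r_cx_in_halfplane[OF \<xi>] by (simp add: z_def)
  have "log_g_cx z = Ln (complex_of_real (1 - \<xi>))" using log_g_cx_r_cx[OF \<xi>] by (simp add: z_def)
  also have "\<dots> = complex_of_real (ln (1 - \<xi>))" using assms by (intro Ln_of_real) auto
  finally have "log_g_cx z = complex_of_real (ln (1 - \<xi>))" .
  hence "log_g_cx (cnj z) = log_g_cx z" using log_g_cx_cnj[OF zH] by simp
  hence "cnj z = z" using inj_onD[OF inj_on_log_g_cx] zH by simp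
  thus "r_cx (complex_of_real \<xi>) = complex_of_real (Re (r_cx (complex_of_real \<xi>)))"
    by (simp add: z_def complex_eq_iff)
  show "Re (r_cx (complex_of_real \<xi>)) > - (pi\<^sup>2)" using zH by (simp add: z_def halfplane_def)
qed

lemma cfun_sq_eq: "(cfun r)\<^sup>2 = 1 + r * (gfun r)\<^sup>2"
proof -
  consider "r > 0" | "r = 0" | "r < 0" by linarith
  thus ?thesis
  proof cases
    case 1
    thus ?thesis by (simp add: cfun_def gfun_def power_divide cosh_square_eq)
  next
    case 3
    thus ?thesis by (simp add: cfun_def gfun_def power_divide cos_squared_eq)
  qed (simp add: cfun_def gfun_def)
qed

lemma gfun_pos:
  assumes "r > - (pi\<^sup>2)"
  shows "gfun r > 0"
proof -
  have "sqrt (- r) < pi" if "r < 0"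
    using assms real_sqrt_less_mono[of "- r" "pi\<^sup>2"] by simp
  thus ?thesis by (auto simp: gfun_def intro!: divide_pos_pos sin_gt_zero)
qed

lemma sgn_cfun:
  assumes "r > - (pi\<^sup>2)"
  shows "sgn (cfun r) = sgn (4 * r + pi\<^sup>2)"
proof (cases "r < 0")
  case True
  define s where "s = sqrt (- r)"
  have s: "0 < s" "s < pi" "4 * r + pi\<^sup>2 = pi\<^sup>2 - (2 * s)\<^sup>2"
    using True assms real_sqrt_less_mono[of "- r" "pi\<^sup>2"] by (simp_all add: s_def power_mult_distrib)
  consider "s < pi / 2" | "s = pi / 2" | "s > pi / 2" by linarith
  thus ?thesis
  proof cases
    case 1
    hence "(2 * s)\<^sup>2 < pi\<^sup>2" using s by (intro power_strict_mono) auto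
    moreover have "cos s > 0" using 1 s by (intro cos_gt_zero_pi) auto
    ultimately show ?thesis using True s by (simp add: cfun_def s_def)
  next
    case 2
    have "cos s = 0" "4 * r + pi\<^sup>2 = 0" unfolding s(3) 2 by simp_all
    thus ?thesis using True by (simp add: cfun_def s_def[symmetric])
  next
    case 3
    hence "pi\<^sup>2 < (2 * s)\<^sup>2" using pi_gt_zero by (intro power_strict_mono) auto
    moreover have "cos s < 0" using 3 s by (intro cos_lt_zero_pi) auto
    ultimately show ?thesis using True s by (simp add: cfun_def s_def)
  qed
next
  case False
  hence "4 * r + pi\<^sup>2 > 0" by (simp add: add_nonneg_pos)
  thus ?thesis using False by (auto simp: cfun_def)
qed

lemma sgn_mult_sqrt_eq_cfun:
  assumes r: "r > - (pi\<^sup>2)"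
  shows "sgn (4 * r + pi\<^sup>2) * sqrt ((1 / gfun r)\<^sup>2 + r) = cfun r / gfun r"
proof -
  have g: "gfun r > 0" by (rule gfun_pos[OF r])
  hence "(1 / gfun r)\<^sup>2 + r = (cfun r / gfun r)\<^sup>2"
    using cfun_sq_eq[of r] by (simp add: power_divide field_simps)
  hence "sqrt ((1 / gfun r)\<^sup>2 + r) = \<bar>cfun r\<bar> / gfun r" using g by simp
  thus ?thesis using sgn_cfun[OF r] by (simp flip: sgn_cfun[OF r] add: sgn_mult_abs)
qed
lemma F_cx_of_real:
  fixes \<xi> :: real
  assumes "\<bar>\<xi>\<bar> < 1"
  shows "F_cx (complex_of_real \<xi>) = complex_of_real (Ffun \<xi>)"
proof -
  define r where "r = Re (r_cx (complex_of_real \<xi>))"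
  have r: "r > - (pi\<^sup>2)" using Re_r_cx_of_real_gt[OF assms] by (simp add: r_def)
  have r_cx: "r_cx (complex_of_real \<xi>) = complex_of_real r" using r_cx_of_real[OF assms] by (simp add: r_def)
  have "complex_of_real (gfun r) = complex_of_real (1 - \<xi>)"
    using g_cx_r_cx[of "complex_of_real \<xi>"] assms r_cx g_cx_of_real[OF r] by simp
  hence g: "gfun r = 1 - \<xi>" by (simp only: of_real_eq_iff)
  hence "gfun r \<noteq> 0" using assms by simp
  have "Ffun \<xi> = gfun r * (2 / gfun r - 2 * (cfun r / gfun r) + r)"
    using sgn_mult_sqrt_eq_cfun[OF r] ginv_gfun[OF r]
    by (simp add: Ffun_def Gfun_def flip: g)
  also have "\<dots> = 2 - 2 * cfun r + r * gfun r"
    using \<open>gfun r \<noteq> 0\<close> by (simp add: distrib_left right_diff_distrib)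
  finally show ?thesis
    using c_cx_of_real[OF r] g_cx_of_real[OF r] by (simp add: F_cx_def h_cx_def r_cx)
qed

lemma acoef_sums:
  fixes \<xi> :: real
  assumes "\<bar>\<xi>\<bar> < 1"
  shows "(\<lambda>n. acoef n * \<xi> ^ n) sums Ffun \<xi>"
  unfolding acoef_def using real_restriction_taylor_sums[OF holomorphic_F_cx F_cx_of_real assms] .

lemma acoef_0: "acoef 0 = 0"
  using F_cx_of_real[of 0] by (simp add: acoef_def F_cx_0)

lemma acoef_1: "acoef 1 = 0"
  using higher_deriv_real_restriction[OF holomorphic_F_cx F_cx_of_real, of 0 1]
  by (simp add: acoef_def deriv_F_cx_0)

theorem theorem3p2:
  fixes \<eta> :: real
  assumes "\<eta> > 1"
  shows "(\<lambda>N. \<Sum>n=2..N. acoef n * (\<eta> - 1) ^ n / \<eta> ^ (n - 1)) \<longlonglongrightarrow> Gfun \<eta>"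
proof -
  define \<xi> where "\<xi> = (\<eta> - 1) / \<eta>"
  have "0 < \<xi>" "\<xi> < 1" "1 - \<xi> = 1 / \<eta>"
    using assms by (simp_all add: \<xi>_def divide_less_eq field_simps)
  hence "(\<lambda>n. \<eta> * (acoef n * \<xi> ^ n)) sums (\<eta> * Ffun \<xi>)" by (intro sums_mult acoef_sums) simp
  moreover have "\<eta> * Ffun \<xi> = Gfun \<eta>"
    using assms \<open>1 - \<xi> = 1 / \<eta>\<close> by (simp add: Ffun_def)
  moreover have "\<eta> * (acoef n * \<xi> ^ n) = acoef n * (\<eta> - 1) ^ n / \<eta> ^ (n - 1)" for n
  proof (cases "n = 0")
    case False
    hence "\<eta> ^ n = \<eta> * \<eta> ^ (n - 1)" by (simp add: power_eq_if)
    thus ?thesis using assms by (simp add: \<xi>_def power_divide)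
  qed (simp add: acoef_0)
  ultimately have "(\<lambda>n. acoef n * (\<eta> - 1) ^ n / \<eta> ^ (n - 1)) sums Gfun \<eta>" by simp
  thus ?thesis by (rule sums_imp_tendsto_sum_from_2) (use acoef_0 acoef_1 in simp_all)
qed

end
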